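(* Let $r<\min\{m,n\}$ and $\mathcal{M}_\mathbb{C}=\{X\in\mathbb{C}^{m\times n}:\operatorname{rank}_\mathbb{C}X\le r\}$. There is a Zariski-open dense set $\mathcal{U}_3\subset\mathcal{M}_\mathbb{C}$ such that for every $X=[x_1\cdots x_n]\in\mathcal{U}_3$, every $j\in[n]$, every set $\mathcal{J}=\{j_1,\dots,j_r\}\subseteq[n]$ of $r$ distinct indices with $j\notin\mathcal{J}$, and every $\Pi_1,\dots,\Pi_r\in\mathcal{P}_m$ not all equal to $I_m$, we have $\operatorname{rank}[x_j\ \Pi_1x_{j_1}\ \cdots\ \Pi_rx_{j_r}]=r+1$.
   Context: $\mathcal{P}_m$ is the set of $m\times m$ permutation matrices, $I_m$ the identity. $\mathcal{M}_\mathbb{C}$ carries the Zariski topology. *)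

theory Defs
  imports "Jordan_Normal_Form.DL_Rank"
begin

inductive_set poly_fun :: "nat \<Rightarrow> nat \<Rightarrow> (complex mat \<Rightarrow> complex) set"
  for m n :: nat where
  const: "(\<lambda>X. c) \<in> poly_fun m n"
| coord: "i < m \<Longrightarrow> j < n \<Longrightarrow> (\<lambda>X. X $$ (i, j)) \<in> poly_fun m n"
| add: "f \<in> poly_fun m n \<Longrightarrow> g \<in> poly_fun m n \<Longrightarrow> (\<lambda>X. f X + g X) \<in> poly_fun m n"
| mult: "f \<in> poly_fun m n \<Longrightarrow> g \<in> poly_fun m n \<Longrightarrow> (\<lambda>X. f X * g X) \<in> poly_fun m n"

definition low_rank_var :: "nat \<Rightarrow> nat \<Rightarrow> nat \<Rightarrow> complex mat set" where
  "low_rank_var m n r = {X \<in> carrier_mat m n. vec_space.rank m X \<le> r}"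

definition zariski_closed_in :: "nat \<Rightarrow> nat \<Rightarrow> complex mat set \<Rightarrow> complex mat set \<Rightarrow> bool" where
  "zariski_closed_in m n M Z \<longleftrightarrow>
     (\<exists>F. F \<subseteq> poly_fun m n \<and> Z = {X \<in> M. \<forall>f\<in>F. f X = 0})"

definition zariski_open_in :: "nat \<Rightarrow> nat \<Rightarrow> complex mat set \<Rightarrow> complex mat set \<Rightarrow> bool" where
  "zariski_open_in m n M U \<longleftrightarrow> U \<subseteq> M \<and> zariski_closed_in m n M (M - U)"

definition zariski_dense_in :: "nat \<Rightarrow> nat \<Rightarrow> complex mat set \<Rightarrow> complex mat set \<Rightarrow> bool" where
  "zariski_dense_in m n M U \<longleftrightarrow> U \<subseteq> M \<and>
     (\<forall>Z. zariski_closed_in m n M Z \<and> U \<subseteq> Z \<longrightarrow> Z = M)"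

definition perm_mats :: "nat \<Rightarrow> complex mat set" where
  "perm_mats m = {P. \<exists>\<sigma>. \<sigma> permutes {..<m} \<and>
     P = mat m m (\<lambda>(i, j). if \<sigma> i = j then 1 else 0)}"

end

theory Submission
  imports Defs
begin

(* Fix one of the finitely many choices c = (j, J, \<Pi>) and let N_c(X) = [x_j \<Pi>_1 x_{j_1} ... \<Pi>_r x_{j_r}].
   Its entries are coordinates of X, and it has full column rank whenever det (W * N_c(X)) \<noteq> 0
   for some W.  Taking for X a rank-r matrix with x_j = x_{j_k} for a k where \<Pi>_k moves a
   coordinate, the columns of N_c(X) become distinct unit vectors, so W_c * N_c(X) = 1 for a
   suitable W_c.  The determinantal variety is irreducible, being the image of (A, B) \<mapsto> A * B,
   hence the product f of the polynomials det (W_c * N_c(X)) does not vanish identically on it,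
   and U = {f \<noteq> 0} is Zariski open and dense. *)

lemma poly_fun_sum:
  assumes "finite S" "\<And>s. s \<in> S \<Longrightarrow> f s \<in> poly_fun m n"
  shows "(\<lambda>X. \<Sum>s\<in>S. f s X) \<in> poly_fun m n"
  using assms
proof (induction S rule: finite_induct)
  case empty
  then show ?case using poly_fun.const[of 0] by simp
next
  case (insert x F)
  then show ?case using poly_fun.add[of "f x" m n "\<lambda>X. \<Sum>s\<in>F. f s X"] by simp
qed

lemma poly_fun_prod:
  assumes "finite S" "\<And>s. s \<in> S \<Longrightarrow> f s \<in> poly_fun m n"
  shows "(\<lambda>X. \<Prod>s\<in>S. f s X) \<in> poly_fun m n"
  using assms
proof (induction S rule: finite_induct)
  case empty
  then show ?case using poly_fun.const[of 1] by simp
next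
  case (insert x F)
  then show ?case using poly_fun.mult[of "f x" m n "\<lambda>X. \<Prod>s\<in>F. f s X"] by simp
qed

lemma poly_fun_cmult: "f \<in> poly_fun m n \<Longrightarrow> (\<lambda>X. c * f X) \<in> poly_fun m n"
  using poly_fun.mult[OF poly_fun.const] by simp

lemma poly_fun_det:
  assumes "\<And>X. F X \<in> carrier_mat k k"
    and "\<And>i l. i < k \<Longrightarrow> l < k \<Longrightarrow> (\<lambda>X. F X $$ (i, l)) \<in> poly_fun m n"
  shows "(\<lambda>X. det (F X)) \<in> poly_fun m n"
proof -
  have "det (F X) = (\<Sum>p\<in>{p. p permutes {0..<k}}. signof p * (\<Prod>i = 0..<k. F X $$ (i, p i)))" for X
    using assms(1)[of X] unfolding det_def by auto
  moreover have "(\<lambda>X. \<Sum>p\<in>{p. p permutes {0..<k}}. signof p * (\<Prod>i = 0..<k. F X $$ (i, p i)))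
      \<in> poly_fun m n"
    using assms(2) permutes_in_image
    by (intro poly_fun_sum poly_fun_cmult poly_fun_prod) (auto simp: finite_permutations)
  ultimately show ?thesis by presburger
qed

lemma poly_fun_det_mult:
  assumes W: "W \<in> carrier_mat k d" and N: "\<And>X. N X \<in> carrier_mat d k"
    and entries: "\<And>i l. i < d \<Longrightarrow> l < k \<Longrightarrow> (\<lambda>X. N X $$ (i, l)) \<in> poly_fun m n"
  shows "(\<lambda>X. det (W * N X)) \<in> poly_fun m n"
proof (rule poly_fun_det)
  show "W * N X \<in> carrier_mat k k" for X using W N[of X] by simp
  fix i l assume "i < k" "l < k"
  then have "(W * N X) $$ (i, l) = (\<Sum>s\<in>{0..<d}. W $$ (i, s) * N X $$ (s, l))" for X
    using W N[of X] by (simp add: scalar_prod_def)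
  moreover have "(\<lambda>X. \<Sum>s\<in>{0..<d}. W $$ (i, s) * N X $$ (s, l)) \<in> poly_fun m n"
    using \<open>l < k\<close> by (intro poly_fun_sum poly_fun_cmult entries) auto
  ultimately show "(\<lambda>X. (W * N X) $$ (i, l)) \<in> poly_fun m n"
    by presburger
qed

lemma poly_fun_along_poly_curve:
  assumes "f \<in> poly_fun m n"
    and "\<And>i j. i < m \<Longrightarrow> j < n \<Longrightarrow> \<exists>p. \<forall>t. \<gamma> t $$ (i, j) = poly p t"
  shows "\<exists>q. \<forall>t. f (\<gamma> t) = poly q t"
  using assms
proof (induction f rule: poly_fun.induct)
  case (const c)
  show ?case by (intro exI[of _ "[:c:]"]) simp
next
  case (coord i j)
  then show ?case by blast
next
  case (add f g)
  then obtain p q where "\<forall>t. f (\<gamma> t) = poly p t" "\<forall>t. g (\<gamma> t) = poly q t" by blast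
  then show ?case by (intro exI[of _ "p + q"]) simp
next
  case (mult f g)
  then obtain p q where "\<forall>t. f (\<gamma> t) = poly p t" "\<forall>t. g (\<gamma> t) = poly q t" by blast
  then show ?case by (intro exI[of _ "p * q"]) simp
qed

definition mat_segment :: "'a::comm_ring_1 mat \<Rightarrow> 'a mat \<Rightarrow> 'a \<Rightarrow> 'a mat" where
  "mat_segment A0 A1 t = A0 + t \<cdot>\<^sub>m (A1 - A0)"

lemma mat_segment_carrier:
  "A0 \<in> carrier_mat k l \<Longrightarrow> A1 \<in> carrier_mat k l \<Longrightarrow> mat_segment A0 A1 t \<in> carrier_mat k l"
  unfolding mat_segment_def by (simp add: minus_carrier_mat)

lemma mat_segment_0: "A0 \<in> carrier_mat k l \<Longrightarrow> A1 \<in> carrier_mat k l \<Longrightarrow> mat_segment A0 A1 0 = A0"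
  unfolding mat_segment_def by (intro eq_matI) auto

lemma mat_segment_1: "A0 \<in> carrier_mat k l \<Longrightarrow> A1 \<in> carrier_mat k l \<Longrightarrow> mat_segment A0 A1 1 = A1"
  unfolding mat_segment_def by (intro eq_matI) auto

lemma poly_fun_along_product_segment:
  assumes f: "f \<in> poly_fun m n"
    and A: "A0 \<in> carrier_mat m r" "A1 \<in> carrier_mat m r"
    and B: "B0 \<in> carrier_mat r n" "B1 \<in> carrier_mat r n"
  shows "\<exists>q. \<forall>t. f (mat_segment A0 A1 t * mat_segment B0 B1 t) = poly q t"
proof (rule poly_fun_along_poly_curve[OF f])
  fix i j assume "i < m" "j < n"
  then have "(mat_segment A0 A1 t * mat_segment B0 B1 t) $$ (i, j) =
    poly (\<Sum>k<r. [:A0 $$ (i, k), A1 $$ (i, k) - A0 $$ (i, k):] *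
                 [:B0 $$ (k, j), B1 $$ (k, j) - B0 $$ (k, j):]) t" for t
    using A B unfolding mat_segment_def
    by (simp add: poly_sum scalar_prod_def algebra_simps atLeast0LessThan)
  then show "\<exists>p. \<forall>t. (mat_segment A0 A1 t * mat_segment B0 B1 t) $$ (i, j) = poly p t"
    by blast
qed

definition zariski_irreducible :: "nat \<Rightarrow> nat \<Rightarrow> complex mat set \<Rightarrow> bool" where
  "zariski_irreducible m n M \<longleftrightarrow>
     (\<forall>f\<in>poly_fun m n. \<forall>g\<in>poly_fun m n. (\<forall>X\<in>M. f X * g X = 0) \<longrightarrow>
        (\<forall>X\<in>M. f X = 0) \<or> (\<forall>X\<in>M. g X = 0))"

lemma zariski_irreducibleD:
  "zariski_irreducible m n M \<Longrightarrow> f \<in> poly_fun m n \<Longrightarrow> g \<in> poly_fun m n \<Longrightarrow>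
    \<forall>X\<in>M. f X * g X = 0 \<Longrightarrow> (\<forall>X\<in>M. f X = 0) \<or> (\<forall>X\<in>M. g X = 0)"
  unfolding zariski_irreducible_def by blast

lemma zariski_open_in_nonvanishing:
  assumes "f \<in> poly_fun m n"
  shows "zariski_open_in m n M {X \<in> M. f X \<noteq> 0}"
proof -
  have "M - {X \<in> M. f X \<noteq> 0} = {X \<in> M. \<forall>g\<in>{f}. g X = 0}" by auto
  then show ?thesis
    unfolding zariski_open_in_def zariski_closed_in_def using assms by blast
qed

lemma zariski_dense_in_nonvanishing:
  assumes irr: "zariski_irreducible m n M" and f: "f \<in> poly_fun m n"
    and nz: "\<exists>X\<in>M. f X \<noteq> 0"
  shows "zariski_dense_in m n M {X \<in> M. f X \<noteq> 0}"
  unfolding zariski_dense_in_def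
proof (intro conjI allI impI)
  fix Z assume Z: "zariski_closed_in m n M Z \<and> {X \<in> M. f X \<noteq> 0} \<subseteq> Z"
  then obtain G where G: "G \<subseteq> poly_fun m n" and ZG: "Z = {X \<in> M. \<forall>g\<in>G. g X = 0}"
    unfolding zariski_closed_in_def by blast
  have "\<forall>X\<in>M. g X = 0" if "g \<in> G" for g
  proof -
    have "\<forall>X\<in>M. g X * f X = 0" using Z ZG that by auto
    then show ?thesis using zariski_irreducibleD[OF irr] G f nz that by blast
  qed
  then show "Z = M" using ZG by auto
qed auto

lemma zariski_irreducible_prod_nonvanishing:
  assumes irr: "zariski_irreducible m n M" and "finite I"
    and "\<And>i. i \<in> I \<Longrightarrow> g i \<in> poly_fun m n"
    and "\<And>i. i \<in> I \<Longrightarrow> \<exists>X\<in>M. g i X \<noteq> 0"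
    and "M \<noteq> {}"
  shows "\<exists>X\<in>M. (\<Prod>i\<in>I. g i X) \<noteq> 0"
  using assms(2-)
proof (induction I rule: finite_induct)
  case (insert i I)
  then have "\<not> (\<forall>X\<in>M. g i X * (\<Prod>i\<in>I. g i X) = 0)"
    using zariski_irreducibleD[OF irr] poly_fun_prod[of I g m n] by blast
  then show ?case using insert.hyps by auto
qed auto

lemma (in vec_space) mult_in_span_cols:
  assumes A: "A \<in> carrier_mat n k" and v: "v \<in> carrier_vec k"
  shows "A *\<^sub>v v \<in> span (set (cols A))"
proof -
  have "\<forall>w\<in>set (cols A). dim_vec w = n" using A by (auto simp: cols_def)
  then have "lincomb_list (\<lambda>i. v $ i) (cols A) = mat_of_cols n (cols A) *\<^sub>v vec k (\<lambda>i. v $ i)"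
    using lincomb_list_as_mat_mult A by fastforce
  also have "\<dots> = A *\<^sub>v v"
  proof -
    have "vec k (\<lambda>i. v $ i) = v" using v by auto
    then show ?thesis using A mat_of_cols_cols[of A] by auto
  qed
  finally have "A *\<^sub>v v \<in> span_list (cols A)" by (metis in_span_listI)
  moreover have "set (cols A) \<subseteq> carrier_vec n" using A cols_dim by blast
  ultimately show ?thesis using span_list_as_span by simp
qed

lemma (in vec_space) rank_mult_le:
  assumes A: "A \<in> carrier_mat n k" and B: "B \<in> carrier_mat k nc"
  shows "rank (A * B) \<le> rank A"
proof -
  define W where "W = span (set (cols A))"
  have AB: "set (cols (A * B)) \<subseteq> carrier_vec n" using cols_dim[of "A * B"] A by simp
  have "set (cols (A * B)) \<subseteq> W"
  proof
    fix x assume "x \<in> set (cols (A * B))"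
    then obtain i where "i < length (cols (A * B))" "x = cols (A * B) ! i"
      by (auto simp: in_set_conv_nth)
    then have i: "i < nc" "x = col (A * B) i" using B by auto
    then have "x = A *\<^sub>v col B i" using col_mult2[OF A B] by simp
    then show "x \<in> W" unfolding W_def using mult_in_span_cols[OF A] B i(1) by simp
  qed
  moreover have WS: "subspace class_ring W V"
    unfolding W_def using A cols_dim carrier_matD(1) span_is_subspace by blast
  ultimately have sub: "span (set (cols (A * B))) \<subseteq> W" by (simp add: span_is_subset)
  have "subspace class_ring (span (set (cols (A * B)))) (vs W)"
    using nested_subspaces[OF WS span_is_subspace[OF AB] sub] .
  moreover have "vectorspace.fin_dim class_ring (vs W)" using W_def A fin_dim_span_cols by auto
  moreover have "vectorspace.fin_dim class_ring (span_vs (set (cols (A * B))))"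
    using A B fin_dim_span_cols by (metis mult_carrier_mat)
  ultimately have "rank (A * B) \<le> vectorspace.dim class_ring (vs W)" unfolding rank_def
    using vectorspace.subspace_dim[OF subspace_is_vs[OF WS]] by auto
  then show ?thesis unfolding rank_def W_def by simp
qed

lemma (in vec_space) low_rank_spanning_list:
  assumes X: "X \<in> carrier_mat n nc" and rk: "rank X \<le> r"
  shows "\<exists>ws. length ws = r \<and> set ws \<subseteq> carrier_vec n \<and> set (cols X) \<subseteq> span (set ws)"
proof -
  obtain S where maxS: "maximal S (\<lambda>T. T \<subseteq> set (cols X) \<and> lin_indpt T)"
    using maximal_exists[of "\<lambda>T. T \<subseteq> set (cols X) \<and> lin_indpt T" "card (set (cols X))" "{}"]
    by (meson List.finite_set card_mono empty_iff empty_subsetI finite_lin_indpt2 rev_finite_subset)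
  have S: "S \<subseteq> set (cols X)" "lin_indpt S" using maxS unfolding maximal_def by auto
  have colsC: "set (cols X) \<subseteq> carrier_vec n" using X cols_dim by blast
  have SC: "S \<subseteq> carrier_vec n" using S colsC by blast
  have spanS: "set (cols X) \<subseteq> span S"
  proof
    fix c assume c: "c \<in> set (cols X)"
    show "c \<in> span S"
    proof (cases "c \<in> S")
      case True
      then show ?thesis using in_own_span[OF SC] by auto
    next
      case False
      have "\<not> lin_indpt (insert c S)"
      proof
        assume "lin_indpt (insert c S)"
        then have "S = insert c S" using maxS c S(1) unfolding maximal_def by blast
        then show False using False by blast
      qed
      then show ?thesis using lin_dep_iff_in_span[OF SC S(2) _ False] c colsC by auto
    qed
  qed
  have "finite S" using S(1) List.finite_set finite_subset by blast
  then obtain ws where ws: "set ws = S" "distinct ws" using finite_distinct_list by blast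
  have "length ws \<le> r" using rank_card_indpt[OF X maxS] rk distinct_card[OF ws(2)] ws(1) by simp
  define ws' where "ws' = ws @ replicate (r - length ws) (0\<^sub>v n)"
  have "length ws' = r" unfolding ws'_def using \<open>length ws \<le> r\<close> by simp
  moreover have "set ws' \<subseteq> carrier_vec n" unfolding ws'_def using ws SC by auto
  moreover have "set (cols X) \<subseteq> span (set ws')"
    using spanS span_is_monotone[of S "set ws'"] ws(1) unfolding ws'_def by auto
  ultimately show ?thesis by blast
qed

lemma (in vec_space) factor_through_spanning_list:
  assumes X: "X \<in> carrier_mat n nc" and ws: "set ws \<subseteq> carrier_vec n"
    and span: "set (cols X) \<subseteq> span (set ws)"
  shows "\<exists>B\<in>carrier_mat (length ws) nc. X = mat_of_cols n ws * B"
proof -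
  have "\<exists>c. col X j = mat_of_cols n ws *\<^sub>v vec (length ws) c" if j: "j < nc" for j
  proof -
    have "col X j \<in> span_list ws"
      using span j X span_list_as_span[OF ws] by (auto simp: cols_def)
    then obtain c where "col X j = lincomb_list c ws" by (metis in_span_listE)
    moreover have "\<forall>w\<in>set ws. dim_vec w = n" using ws by auto
    ultimately show ?thesis using lincomb_list_as_mat_mult by metis
  qed
  then obtain c where c: "\<And>j. j < nc \<Longrightarrow> col X j = mat_of_cols n ws *\<^sub>v vec (length ws) (c j)"
    by metis
  define B where "B = mat (length ws) nc (\<lambda>(k, j). c j k)"
  have "X = mat_of_cols n ws * B"
  proof (rule eq_matI)
    fix i j assume "i < dim_row (mat_of_cols n ws * B)" "j < dim_col (mat_of_cols n ws * B)"
    then have ij: "i < n" "j < nc" unfolding B_def by auto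
    have "col B j = vec (length ws) (c j)" using ij unfolding B_def by auto
    then have "(mat_of_cols n ws * B) $$ (i, j) = (mat_of_cols n ws *\<^sub>v vec (length ws) (c j)) $ i"
      using ij unfolding B_def by simp
    also have "\<dots> = col X j $ i" using c[OF ij(2)] by simp
    also have "\<dots> = X $$ (i, j)" using X ij by simp
    finally show "X $$ (i, j) = (mat_of_cols n ws * B) $$ (i, j)" by simp
  qed (use X in \<open>auto simp: B_def\<close>)
  then show ?thesis unfolding B_def by auto
qed

lemma low_rank_var_eq_products:
  "low_rank_var m n r = {A * B |A B. A \<in> carrier_mat m r \<and> B \<in> carrier_mat r n}"
proof (intro equalityI subsetI)
  interpret vec_space "TYPE(complex)" m .
  fix X :: "complex mat"
  assume "X \<in> low_rank_var m n r"
  then have X: "X \<in> carrier_mat m n" "rank X \<le> r" unfolding low_rank_var_def by auto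
  then obtain ws where ws: "length ws = r" "set ws \<subseteq> carrier_vec m" "set (cols X) \<subseteq> span (set ws)"
    using low_rank_spanning_list by blast
  then obtain B where "B \<in> carrier_mat r n" "X = mat_of_cols m ws * B"
    using factor_through_spanning_list[OF X(1) ws(2,3)] by blast
  moreover have "mat_of_cols m ws \<in> carrier_mat m r" using mat_of_cols_carrier(1)[of m ws] ws(1) by simp
  ultimately show "X \<in> {A * B |A B. A \<in> carrier_mat m r \<and> B \<in> carrier_mat r n}" by blast
next
  interpret vec_space "TYPE(complex)" m .
  fix X :: "complex mat"
  assume "X \<in> {A * B |A B. A \<in> carrier_mat m r \<and> B \<in> carrier_mat r n}"
  then obtain A B where AB: "A \<in> carrier_mat m r" "B \<in> carrier_mat r n" "X = A * B" by blast
  have "rank X \<le> rank A" using rank_mult_le[OF AB(1,2)] AB(3) by simp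
  also have "\<dots> \<le> r" using rank_le_nc[OF AB(1)] .
  finally show "X \<in> low_rank_var m n r" unfolding low_rank_var_def using AB by auto
qed

(* Along the segment joining two factorisations A0 * B0 and A1 * B1 every polynomial function
   restricts to a univariate polynomial, and \<complex>[t] has no zero divisors. *)
lemma zariski_irreducible_low_rank_var: "zariski_irreducible m n (low_rank_var m n r)"
  unfolding zariski_irreducible_def
proof (intro ballI impI)
  fix f g
  assume f: "f \<in> poly_fun m n" and g: "g \<in> poly_fun m n"
    and vanish: "\<forall>X\<in>low_rank_var m n r. f X * g X = 0"
  show "(\<forall>X\<in>low_rank_var m n r. f X = 0) \<or> (\<forall>X\<in>low_rank_var m n r. g X = 0)"
  proof (rule ccontr)
    assume "\<not> ?thesis"
    then obtain A0 B0 A1 B1 where A: "A0 \<in> carrier_mat m r" "A1 \<in> carrier_mat m r"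
      and B: "B0 \<in> carrier_mat r n" "B1 \<in> carrier_mat r n"
      and nz: "f (A0 * B0) \<noteq> 0" "g (A1 * B1) \<noteq> 0"
      unfolding low_rank_var_eq_products by blast
    define \<gamma> where "\<gamma> t = mat_segment A0 A1 t * mat_segment B0 B1 t" for t
    obtain p where p: "\<And>t. f (\<gamma> t) = poly p t"
      using poly_fun_along_product_segment[OF f A B] unfolding \<gamma>_def by blast
    obtain q where q: "\<And>t. g (\<gamma> t) = poly q t"
      using poly_fun_along_product_segment[OF g A B] unfolding \<gamma>_def by blast
    have "\<gamma> t \<in> low_rank_var m n r" for t
      unfolding low_rank_var_eq_products \<gamma>_def using A B mat_segment_carrier by blast
    then have "poly (p * q) t = 0" for t using vanish by (simp flip: p q)
    then have "p * q = 0" using poly_all_0_iff_0 by blast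
    moreover have "p \<noteq> 0" using p[of 0] nz(1) unfolding \<gamma>_def mat_segment_0[OF A] mat_segment_0[OF B] by auto
    moreover have "q \<noteq> 0" using q[of 1] nz(2) unfolding \<gamma>_def mat_segment_1[OF A] mat_segment_1[OF B] by auto
    ultimately show False by simp
  qed
qed

definition perm_mat :: "nat \<Rightarrow> (nat \<Rightarrow> nat) \<Rightarrow> 'a::comm_ring_1 mat" where
  "perm_mat m \<sigma> = mat m m (\<lambda>(i, j). if \<sigma> i = j then 1 else 0)"

lemma perm_mat_id: "perm_mat m id = 1\<^sub>m m"
  unfolding perm_mat_def by (intro eq_matI) auto

lemma perm_mat_mult_vec:
  assumes \<sigma>: "\<sigma> permutes {..<m}" and v: "v \<in> carrier_vec m" and i: "i < m"
  shows "(perm_mat m \<sigma> *\<^sub>v v) $ i = v $ \<sigma> i"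
proof -
  have "(perm_mat m \<sigma> *\<^sub>v v) $ i = (\<Sum>s\<in>{0..<m}. (if \<sigma> i = s then 1 else 0) * v $ s)"
    using v i unfolding perm_mat_def by (simp add: scalar_prod_def)
  also have "\<dots> = (\<Sum>s\<in>{0..<m}. if s = \<sigma> i then v $ s else 0)"
    by (intro sum.cong) auto
  also have "\<dots> = v $ \<sigma> i" using permutes_in_image[OF \<sigma>] i by simp
  finally show ?thesis .
qed

(* Entrywise form of [x_j  \<Pi>_0 x_(J 0)  ...  \<Pi>_(r-1) x_(J (r-1))] with \<Pi>_k = perm_mat m (\<sigma> k);
   unlike mat_of_cols it is a polynomial function of X also off carrier_mat m n. *)
fun perm_stack_mat ::
  "nat \<Rightarrow> nat \<Rightarrow> nat \<times> (nat \<Rightarrow> nat) \<times> (nat \<Rightarrow> nat \<Rightarrow> nat) \<Rightarrow> complex mat \<Rightarrow> complex mat" where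
  "perm_stack_mat m r (j, J, \<sigma>) X =
     mat m (Suc r) (\<lambda>(i, l). case l of 0 \<Rightarrow> X $$ (i, j) | Suc k \<Rightarrow> X $$ (\<sigma> k i, J k))"

(* Functions are restricted to {..<r} (extensional) to make this set finite. *)
definition perm_stack_configs ::
  "nat \<Rightarrow> nat \<Rightarrow> nat \<Rightarrow> (nat \<times> (nat \<Rightarrow> nat) \<times> (nat \<Rightarrow> nat \<Rightarrow> nat)) set" where
  "perm_stack_configs m n r = {(j, J, \<sigma>). j < n \<and> J \<in> {..<r} \<rightarrow>\<^sub>E {..<n} \<and> inj_on J {..<r} \<and>
     j \<notin> J ` {..<r} \<and> \<sigma> \<in> {..<r} \<rightarrow>\<^sub>E {\<sigma>. \<sigma> permutes {..<m}} \<and> (\<exists>k<r. \<sigma> k \<noteq> id)}"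

lemma finite_perm_stack_configs: "finite (perm_stack_configs m n r)"
proof (rule finite_subset)
  show "perm_stack_configs m n r \<subseteq>
      {..<n} \<times> ({..<r} \<rightarrow>\<^sub>E {..<n}) \<times> ({..<r} \<rightarrow>\<^sub>E {\<sigma>. \<sigma> permutes {..<m}})"
    unfolding perm_stack_configs_def by auto
qed (simp add: finite_PiE finite_permutations)

lemma perm_stack_mat_carrier: "perm_stack_mat m r c X \<in> carrier_mat m (Suc r)"
  by (cases c) auto

lemma perm_stack_configsD:
  assumes "(j, J, \<sigma>) \<in> perm_stack_configs m n r"
  shows "j < n" and "k < r \<Longrightarrow> J k < n" and "k < r \<Longrightarrow> \<sigma> k permutes {..<m}"
  using assms unfolding perm_stack_configs_def by auto

lemma poly_fun_det_perm_stack_mat: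
  assumes c: "c \<in> perm_stack_configs m n r" and W: "W \<in> carrier_mat (Suc r) m"
  shows "(\<lambda>X. det (W * perm_stack_mat m r c X)) \<in> poly_fun m n"
proof (rule poly_fun_det_mult[OF W perm_stack_mat_carrier])
  obtain j J \<sigma> where c_eq: "c = (j, J, \<sigma>)" by (cases c)
  fix i l assume i: "i < m" and l: "l < Suc r"
  show "(\<lambda>X. perm_stack_mat m r c X $$ (i, l)) \<in> poly_fun m n"
  proof (cases l)
    case 0
    have "(\<lambda>X. perm_stack_mat m r c X $$ (i, l)) = (\<lambda>X. X $$ (i, j))"
      using i l 0 unfolding c_eq by auto
    then show ?thesis using poly_fun.coord[OF i perm_stack_configsD(1)] c unfolding c_eq by simp
  next
    case (Suc k)
    then have k: "k < r" using l by simp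
    have "\<sigma> k i < m" using permutes_in_image[OF perm_stack_configsD(3)[OF c[unfolded c_eq] k]] i by simp
    moreover have "J k < n" using perm_stack_configsD(2)[OF c[unfolded c_eq] k] .
    moreover have "(\<lambda>X. perm_stack_mat m r c X $$ (i, l)) = (\<lambda>X. X $$ (\<sigma> k i, J k))"
      using i l Suc unfolding c_eq by auto
    ultimately show ?thesis using poly_fun.coord by simp
  qed
qed

lemma perm_stack_mat_restrict:
  "perm_stack_mat m r (j, restrict J {..<r}, restrict \<sigma> {..<r}) X = perm_stack_mat m r (j, J, \<sigma>) X"
  by (intro eq_matI) (auto split: nat.split)

lemma mat_of_cols_perm_mat_cols:
  assumes X: "X \<in> carrier_mat m n" and j: "j < n" and J: "\<And>k. k < r \<Longrightarrow> J k < n"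
    and \<sigma>: "\<And>k. k < r \<Longrightarrow> \<sigma> k permutes {..<m}"
  shows "mat_of_cols m (col X j # map (\<lambda>k. perm_mat m (\<sigma> k) *\<^sub>v col X (J k)) [0..<r])
    = perm_stack_mat m r (j, J, \<sigma>) X"
proof (rule eq_matI)
  fix i l assume "i < dim_row (perm_stack_mat m r (j, J, \<sigma>) X)" "l < dim_col (perm_stack_mat m r (j, J, \<sigma>) X)"
  then have i: "i < m" and l: "l < Suc r" by auto
  show "mat_of_cols m (col X j # map (\<lambda>k. perm_mat m (\<sigma> k) *\<^sub>v col X (J k)) [0..<r]) $$ (i, l)
    = perm_stack_mat m r (j, J, \<sigma>) X $$ (i, l)"
  proof (cases l)
    case 0
    then show ?thesis using i X j by (simp add: mat_of_cols_def)
  next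
    case (Suc k)
    then have k: "k < r" using l by simp
    have "col X (J k) \<in> carrier_vec m" by (metis X carrier_matD(1) col_dim)
    then have "(perm_mat m (\<sigma> k) *\<^sub>v col X (J k)) $ i = col X (J k) $ \<sigma> k i"
      using perm_mat_mult_vec[OF \<sigma>[OF k]] i by blast
    also have "\<dots> = X $$ (\<sigma> k i, J k)"
      using X J[OF k] permutes_in_image[OF \<sigma>[OF k]] i by simp
    finally have "(perm_mat m (\<sigma> k) *\<^sub>v col X (J k)) $ i = X $$ (\<sigma> k i, J k)" .
    then show ?thesis using Suc i k by (simp add: mat_of_cols_def)
  qed
qed auto

lemma perm_stack_config_exists:
  assumes X: "X \<in> carrier_mat m n" and j: "j < n"
    and J: "\<forall>k<r. J k < n" "inj_on J {..<r}" "j \<notin> J ` {..<r}"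
    and P: "\<forall>k<r. P k \<in> perm_mats m" "\<exists>k<r. P k \<noteq> 1\<^sub>m m"
  shows "\<exists>c\<in>perm_stack_configs m n r.
    mat_of_cols m (col X j # map (\<lambda>k. P k *\<^sub>v col X (J k)) [0..<r]) = perm_stack_mat m r c X"
proof -
  have "\<forall>k<r. \<exists>\<sigma>. \<sigma> permutes {..<m} \<and> P k = perm_mat m \<sigma>"
    using P(1) unfolding perm_mats_def perm_mat_def by simp
  then obtain \<sigma> where
    \<sigma>: "\<And>k. k < r \<Longrightarrow> \<sigma> k permutes {..<m}" "\<And>k. k < r \<Longrightarrow> P k = perm_mat m (\<sigma> k)"
    by metis
  obtain k where k: "k < r" "P k \<noteq> 1\<^sub>m m" using P(2) by blast
  then have "restrict \<sigma> {..<r} k \<noteq> id" using \<sigma>(2) perm_mat_id by fastforce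
  moreover have "restrict J {..<r} \<in> {..<r} \<rightarrow>\<^sub>E {..<n}"
    "restrict \<sigma> {..<r} \<in> {..<r} \<rightarrow>\<^sub>E {\<sigma>. \<sigma> permutes {..<m}}"
    using J(1) \<sigma>(1) by auto
  moreover have "inj_on (restrict J {..<r}) {..<r}" "restrict J {..<r} ` {..<r} = J ` {..<r}"
    using J(2) by (simp_all add: inj_on_def)
  ultimately have c: "(j, restrict J {..<r}, restrict \<sigma> {..<r}) \<in> perm_stack_configs m n r"
    using j J(3) k(1) unfolding perm_stack_configs_def by blast
  have "mat_of_cols m (col X j # map (\<lambda>k. P k *\<^sub>v col X (J k)) [0..<r])
      = mat_of_cols m (col X j # map (\<lambda>k. perm_mat m (\<sigma> k) *\<^sub>v col X (J k)) [0..<r])"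
    using \<sigma>(2) by (intro arg_cong[where f = "\<lambda>cs. mat_of_cols m (col X j # cs)"] map_cong) auto
  also have "\<dots> = perm_stack_mat m r (j, J, \<sigma>) X"
    using J(1) \<sigma>(1) by (intro mat_of_cols_perm_mat_cols[OF X j]) auto
  also have "\<dots> = perm_stack_mat m r (j, restrict J {..<r}, restrict \<sigma> {..<r}) X"
    by (rule perm_stack_mat_restrict[symmetric])
  finally show ?thesis using c by blast
qed

lemma exists_inj_with_two_values:
  fixes k m a b x y :: nat
  assumes "k \<le> m" "a < k" "b < k" "a \<noteq> b" "x < m" "y < m" "x \<noteq> y"
  shows "\<exists>u. inj_on u {..<k} \<and> u ` {..<k} \<subseteq> {..<m} \<and> u a = x \<and> u b = y"
proof -
  define b' where "b' = Transposition.transpose a x b"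
  define u where "u = Transposition.transpose b' y \<circ> Transposition.transpose a x"
  have "a < m" using assms(1,2) by linarith
  have "b < m" using assms(1,3) by linarith
  then have "b' \<noteq> x" "b' < m" unfolding b'_def using assms by (auto simp: Transposition.transpose_def)
  then have "u a = x" "u b = y" unfolding u_def b'_def using assms(7) by auto
  moreover have "inj_on u {..<k}" unfolding u_def
    by (intro inj_on_subset[OF inj_compose]) (auto intro: inj_transpose)
  moreover have "u ` {..<k} \<subseteq> {..<m}"
    unfolding u_def using assms \<open>a < m\<close> \<open>b' < m\<close> by (auto simp: Transposition.transpose_def)
  ultimately show ?thesis by blast
qed

lemma exists_inj_moved_by_perm:
  assumes \<sigma>: "\<sigma> permutes {..<m}" "\<sigma> \<noteq> id" and "k < r" "r < m"
  shows "\<exists>u. inj_on u {..<Suc r} \<and> u ` {..<Suc r} \<subseteq> {..<m} \<and> u 0 = \<sigma> (u (Suc k))"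
proof -
  obtain p where p: "\<sigma> p \<noteq> p" using \<sigma>(2) by (metis eq_id_iff)
  then have "p < m" using permutes_not_in[OF \<sigma>(1)] by auto
  then have "\<sigma> p < m" using permutes_in_image[OF \<sigma>(1)] by simp
  then obtain u where "inj_on u {..<Suc r}" "u ` {..<Suc r} \<subseteq> {..<m}" "u (Suc k) = p" "u 0 = \<sigma> p"
    using exists_inj_with_two_values[of "Suc r" m "Suc k" 0 p "\<sigma> p"] assms(3,4) \<open>p < m\<close> p by auto
  then show ?thesis by metis
qed

lemma transpose_mult_unit_cols:
  assumes inj: "inj_on u {..<k}" and range: "u ` {..<k} \<subseteq> {..<m}"
  defines "N \<equiv> mat m k (\<lambda>(i, l). if i = u l then 1 else 0) :: 'a::comm_ring_1 mat"
  shows "transpose_mat N * N = 1\<^sub>m k"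
proof (rule eq_matI)
  fix a b assume "a < dim_row (1\<^sub>m k :: 'a mat)" "b < dim_col (1\<^sub>m k :: 'a mat)"
  then have ab: "a < k" "b < k" by auto
  have "(transpose_mat N * N) $$ (a, b) = (\<Sum>i\<in>{0..<m}. N $$ (i, a) * N $$ (i, b))"
    using ab unfolding N_def by (simp add: scalar_prod_def)
  also have "\<dots> = (\<Sum>i\<in>{0..<m}. if i = u a then (if u a = u b then 1 else 0) else 0)"
    using ab unfolding N_def by (intro sum.cong) auto
  also have "\<dots> = 1\<^sub>m k $$ (a, b)"
    using ab range inj_onD[OF inj, of a b] by auto
  finally show "(transpose_mat N * N) $$ (a, b) = 1\<^sub>m k $$ (a, b)" .
qed (auto simp: N_def)

lemma mat_mult_col_selection:
  fixes A :: "'a::comm_ring_1 mat"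
  assumes A: "A \<in> carrier_mat m r" and s: "\<And>l. l < n \<Longrightarrow> s l < r"
  shows "A * mat r n (\<lambda>(k, l). if k = s l then 1 else 0) = mat m n (\<lambda>(i, l). A $$ (i, s l))"
proof (rule eq_matI)
  fix i l assume "i < dim_row (mat m n (\<lambda>(i, l). A $$ (i, s l)))"
    and "l < dim_col (mat m n (\<lambda>(i, l). A $$ (i, s l)))"
  then have il: "i < m" "l < n" by auto
  have "(A * mat r n (\<lambda>(k, l). if k = s l then 1 else 0)) $$ (i, l)
      = (\<Sum>k\<in>{0..<r}. A $$ (i, k) * (if k = s l then 1 else 0))"
    using A il by (simp add: scalar_prod_def)
  also have "\<dots> = (\<Sum>k\<in>{0..<r}. if k = s l then A $$ (i, k) else 0)" by (intro sum.cong) auto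
  also have "\<dots> = A $$ (i, s l)" using s[OF il(2)] by simp
  finally show "(A * mat r n (\<lambda>(k, l). if k = s l then 1 else 0)) $$ (i, l)
      = mat m n (\<lambda>(i, l). A $$ (i, s l)) $$ (i, l)"
    using il by simp
qed (use A in auto)

lemma col_selection_in_low_rank_var:
  assumes A: "A \<in> carrier_mat m r" and s: "\<And>l. l < n \<Longrightarrow> s l < r"
  shows "mat m n (\<lambda>(i, l). A $$ (i, s l)) \<in> low_rank_var m n r"
proof -
  have "mat r n (\<lambda>(k, l). if k = s l then 1 else 0) \<in> carrier_mat r n" by simp
  then show ?thesis
    using mat_mult_col_selection[where n = n and s = s, OF A s, symmetric] A
    unfolding low_rank_var_eq_products by blast
qed

(* X is chosen so that the columns of the stack are the distinct unit vectors e_(u l); column 0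
   and column k0+1 come from the same column of A and are separated by \<sigma> k0. *)
lemma perm_stack_det_not_identically_zero:
  assumes c: "c \<in> perm_stack_configs m n r" and rm: "r < m"
  shows "\<exists>W\<in>carrier_mat (Suc r) m. \<exists>X\<in>low_rank_var m n r. det (W * perm_stack_mat m r c X) \<noteq> 0"
proof -
  obtain j J \<sigma> where c_eq: "c = (j, J, \<sigma>)" by (cases c)
  note cfg = perm_stack_configsD[OF c[unfolded c_eq]]
  have J: "inj_on J {..<r}" "j \<notin> J ` {..<r}" using c unfolding c_eq perm_stack_configs_def by auto
  obtain k0 where k0: "k0 < r" "\<sigma> k0 \<noteq> id" using c unfolding c_eq perm_stack_configs_def by auto
  obtain u where u: "inj_on u {..<Suc r}" "u ` {..<Suc r} \<subseteq> {..<m}" "u 0 = \<sigma> k0 (u (Suc k0))"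
    using exists_inj_moved_by_perm[OF cfg(3)[OF k0(1)] k0(2) k0(1) rm] by blast
  define A :: "complex mat" where "A = mat m r (\<lambda>(i, k). if i = \<sigma> k (u (Suc k)) then 1 else 0)"
  define s where "s l = (if l \<in> J ` {..<r} then the_inv_into {..<r} J l else k0)" for l
  have s: "s l < r" for l using k0(1) the_inv_into_into[OF J(1)] unfolding s_def by auto
  have sJ: "s (J k) = k" if "k < r" for k using the_inv_into_f_f[OF J(1)] that unfolding s_def by auto
  have sj: "s j = k0" using J(2) unfolding s_def by simp
  define X where "X = mat m n (\<lambda>(i, l). A $$ (i, s l))"
  have X: "X \<in> low_rank_var m n r"
    unfolding X_def by (rule col_selection_in_low_rank_var) (simp_all add: A_def s)
  define N :: "complex mat" where "N = mat m (Suc r) (\<lambda>(i, l). if i = u l then 1 else 0)"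
  have "perm_stack_mat m r c X = N"
  proof (rule eq_matI)
    fix i l assume "i < dim_row N" "l < dim_col N"
    then have i: "i < m" and l: "l < Suc r" unfolding N_def by auto
    show "perm_stack_mat m r c X $$ (i, l) = N $$ (i, l)"
    proof (cases l)
      case 0
      then show ?thesis using i cfg(1) sj k0(1) u(3) unfolding c_eq X_def A_def N_def by auto
    next
      case (Suc k)
      then have k: "k < r" using l by simp
      have \<sigma>k: "\<sigma> k permutes {..<m}" using cfg(3)[OF k] .
      have "perm_stack_mat m r c X $$ (i, l) = A $$ (\<sigma> k i, k)"
        using Suc i k cfg(2)[OF k] sJ[OF k] permutes_in_image[OF \<sigma>k] unfolding c_eq X_def by auto
      also have "\<dots> = (if \<sigma> k i = \<sigma> k (u (Suc k)) then 1 else 0)"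
        using permutes_in_image[OF \<sigma>k] i k unfolding A_def by auto
      also have "\<dots> = N $$ (i, l)"
        using permutes_inj[OF \<sigma>k] i l Suc unfolding N_def by (auto dest: injD)
      finally show ?thesis .
    qed
  qed (use perm_stack_mat_carrier[of m r c X] in \<open>auto simp: N_def\<close>)
  then have "transpose_mat (perm_stack_mat m r c X) * perm_stack_mat m r c X = 1\<^sub>m (Suc r)"
    using transpose_mult_unit_cols[OF u(1,2)] unfolding N_def by simp
  then show ?thesis
    using X perm_stack_mat_carrier[of m r c X]
    by (intro bexI[of _ "transpose_mat (perm_stack_mat m r c X)"] bexI[of _ X]) auto
qed

lemma rank_eq_if_det_mult_nonzero:
  fixes N W :: "complex mat"
  assumes N: "N \<in> carrier_mat m k" and W: "W \<in> carrier_mat k m" and det: "det (W * N) \<noteq> 0"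
  shows "vec_space.rank m N = k"
proof -
  interpret vec_space "TYPE(complex)" m .
  have WN: "W * N \<in> carrier_mat k k" using N W by simp
  have distinct: "distinct (cols N)"
  proof (rule ccontr)
    assume "\<not> distinct (cols N)"
    then obtain i j where "i \<noteq> j" "i < k" "j < k" "col N i = col N j"
      using N distinct_conv_nth[of "cols N"] by auto
    then have "col (W * N) i = col (W * N) j" using N W by simp
    then have "det (W * N) = 0" using det_identical_cols[OF WN \<open>i \<noteq> j\<close>] \<open>i < k\<close> \<open>j < k\<close> by blast
    then show False using det by simp
  qed
  have "N *\<^sub>v v \<noteq> 0\<^sub>v m" if v: "v \<in> carrier_vec k" "v \<noteq> 0\<^sub>v k" for v
  proof
    assume "N *\<^sub>v v = 0\<^sub>v m"
    moreover have "W *\<^sub>v 0\<^sub>v m = 0\<^sub>v k" using W by (intro eq_vecI) (auto simp: scalar_prod_def)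
    ultimately have "(W * N) *\<^sub>v v = 0\<^sub>v k" using N W v by simp
    then show False using det det_0_iff_vec_prod_zero_field[OF WN] v by blast
  qed
  then have "lin_indpt (set (cols N))" using lin_depE[OF N _ distinct] by metis
  then show ?thesis using lin_indpt_full_rank[OF N distinct] by metis
qed

lemma perm_stack_full_rank_poly_fun:
  assumes "r < m"
  shows "\<exists>f\<in>poly_fun m n. (\<exists>X\<in>low_rank_var m n r. f X \<noteq> 0) \<and>
    (\<forall>X\<in>carrier_mat m n. f X \<noteq> 0 \<longrightarrow>
       (\<forall>c\<in>perm_stack_configs m n r. vec_space.rank m (perm_stack_mat m r c X) = Suc r))"
proof -
  define V where "V = low_rank_var m n r"
  define C where "C = perm_stack_configs m n r"
  have finC: "finite C" unfolding C_def by (rule finite_perm_stack_configs)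
  have "\<forall>c\<in>C. \<exists>Wc. Wc \<in> carrier_mat (Suc r) m \<and>
    (\<exists>X\<in>V. det (Wc * perm_stack_mat m r c X) \<noteq> 0)"
    using perm_stack_det_not_identically_zero[OF _ assms] unfolding C_def V_def by blast
  then obtain W where W: "\<And>c. c \<in> C \<Longrightarrow> W c \<in> carrier_mat (Suc r) m"
    and W_nz: "\<And>c. c \<in> C \<Longrightarrow> \<exists>X\<in>V. det (W c * perm_stack_mat m r c X) \<noteq> 0"
    by metis
  have g: "(\<lambda>X. det (W c * perm_stack_mat m r c X)) \<in> poly_fun m n" if "c \<in> C" for c
    using poly_fun_det_perm_stack_mat that W[OF that] unfolding C_def by blast
  define f where "f X = (\<Prod>c\<in>C. det (W c * perm_stack_mat m r c X))" for X
  have f: "f \<in> poly_fun m n" unfolding f_def by (rule poly_fun_prod[OF finC g])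
  have "0\<^sub>m m r * 0\<^sub>m r n \<in> V"
    unfolding V_def low_rank_var_eq_products
    using zero_carrier_mat[of m r] zero_carrier_mat[of r n] by blast
  then have nz: "\<exists>X\<in>V. f X \<noteq> 0"
    using zariski_irreducible_prod_nonvanishing[where g = "\<lambda>c X. det (W c * perm_stack_mat m r c X)",
        OF zariski_irreducible_low_rank_var[of m n r, folded V_def] finC g W_nz]
    unfolding f_def by blast
  have rank: "vec_space.rank m (perm_stack_mat m r c X) = Suc r" if "f X \<noteq> 0" "c \<in> C" for c X
  proof -
    have "det (W c * perm_stack_mat m r c X) \<noteq> 0"
      using that prod_zero_iff[OF finC] unfolding f_def by blast
    then show ?thesis by (rule rank_eq_if_det_mult_nonzero[OF perm_stack_mat_carrier W[OF that(2)]])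
  qed
  show ?thesis
    using f nz rank unfolding V_def C_def by (intro bexI[of _ f] conjI ballI impI) auto
qed

theorem lemma3:
  fixes m n r :: nat
  assumes "r < m" and "r < n"
  shows "\<exists>U. zariski_open_in m n (low_rank_var m n r) U \<and>
             zariski_dense_in m n (low_rank_var m n r) U \<and>
             (\<forall>X\<in>U. \<forall>j<n. \<forall>J :: nat \<Rightarrow> nat. \<forall>P :: nat \<Rightarrow> complex mat.
                (\<forall>k<r. J k < n) \<and> inj_on J {..<r} \<and> j \<notin> J ` {..<r} \<and>
                (\<forall>k<r. P k \<in> perm_mats m) \<and> (\<exists>k<r. P k \<noteq> 1\<^sub>m m)
                \<longrightarrow> vec_space.rank m
                      (mat_of_cols m (col X j # map (\<lambda>k. P k *\<^sub>v col X (J k)) [0..<r]))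
                    = r + 1)"
proof -
  obtain f where f: "f \<in> poly_fun m n" and nz: "\<exists>X\<in>low_rank_var m n r. f X \<noteq> 0"
    and rank: "\<And>X c. X \<in> carrier_mat m n \<Longrightarrow> f X \<noteq> 0 \<Longrightarrow> c \<in> perm_stack_configs m n r \<Longrightarrow>
      vec_space.rank m (perm_stack_mat m r c X) = Suc r"
    using perm_stack_full_rank_poly_fun[OF assms(1)] by blast
  define U where "U = {X \<in> low_rank_var m n r. f X \<noteq> 0}"
  have "zariski_open_in m n (low_rank_var m n r) U"
    unfolding U_def by (rule zariski_open_in_nonvanishing[OF f])
  moreover have "zariski_dense_in m n (low_rank_var m n r) U"
    unfolding U_def by (rule zariski_dense_in_nonvanishing[OF zariski_irreducible_low_rank_var f nz])
  moreover have "vec_space.rank m (mat_of_cols m (col X j # map (\<lambda>k. P k *\<^sub>v col X (J k)) [0..<r]))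
      = r + 1"
    if XU: "X \<in> U" and j: "j < n" and hyps: "(\<forall>k<r. J k < n) \<and> inj_on J {..<r} \<and> j \<notin> J ` {..<r} \<and>
      (\<forall>k<r. P k \<in> perm_mats m) \<and> (\<exists>k<r. P k \<noteq> 1\<^sub>m m)" for X j J P
  proof -
    have X: "X \<in> carrier_mat m n" "f X \<noteq> 0" using XU unfolding U_def low_rank_var_def by auto
    obtain c where "c \<in> perm_stack_configs m n r"
      and "mat_of_cols m (col X j # map (\<lambda>k. P k *\<^sub>v col X (J k)) [0..<r]) = perm_stack_mat m r c X"
      using perm_stack_config_exists[OF X(1) j] hyps by blast
    then show ?thesis using rank[OF X] by simp
  qed
  ultimately show ?thesis by (intro exI[of _ U] conjI ballI allI impI) simp_all
qed

end
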